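(* Let $\zeta\in(0,1]$, $\beta\ge0$, $\lambda\ge0$, $p\in(0,1]$, and integers $\tau_n\ge1$, $D_n\ge1$. Define $V(1,\tau)=\beta$ for $0\le\tau<\tau_n$ and $V(1,\tau)=p\beta$ for $\tau_n\le\tau<\tau_n+D_n$, and define $V(0,\tau)$ for $0\le\tau\le\tau_n+D_n$ by $V(0,0)=0$, $$V(0,\tau)=\max\big\{V(0,\tau-1),\,-\lambda+\zeta V(1,\tau-1)+(1-\zeta)V(0,\tau-1)\big\}\quad (1\le\tau\le\tau_n+D_n,\ \tau\ne\tau_n+1),$$ $$V(0,\tau_n+1)=\max\big\{pV(0,\tau_n),\,-\lambda+\zeta V(1,\tau_n)+(1-\zeta)pV(0,\tau_n)\big\}.$$ (A) Suppose $\zeta\beta>\lambda$ and set $c=\dfrac{\lambda}{(\zeta\beta-\lambda)(1-\zeta)^{\tau_n}+\lambda}$. (i) If $p>c$, then for all $1\le w\le D_n$, $$V(0,\tau_n+w)=-(1-p)\frac{1-(1-\zeta)^{w}}{\zeta}\lambda+p\,\frac{1-(1-\zeta)^{\tau_n+w}}{\zeta}(\zeta\beta-\lambda),$$ and for each such $w$ the maximum defining $V(0,\tau_n+w)$ is attained by the second ("transmit") option. (ii) If $p\le c$, then for all $1\le w\le D_n$, $V(0,\tau_n+w)=p\,\frac{1-(1-\zeta)^{\tau_n}}{\zeta}(\zeta\beta-\lambda)$; if moreover $p<c$, then for each such $w$ the second option is strictly smaller than the first ("do not transmit") option. (B) If $\zeta\beta\le\lambda$, then $V(0,\tau_n+w)=0$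 for all $1\le w\le D_n$, and if $\zeta\beta<\lambda$ the second option is strictly smaller than the first at every $\tau\in\{1,\dots,\tau_n+D_n\}$.
   Context: This is the single-packet dynamic program for a predicted arrival of a user under imperfect prediction, with static channel (success probability $\zeta$ per transmission) and binary resource levels $\{0,1\}$. A predicted packet enters the prediction window $D_n$ slots before its actual arrival and has deadline $\tau_n$ after arrival; $\tau$ is the number of slots remaining until the deadline (so $\tau>\tau_n$ means the packet is still only predicted). Each prediction is correct with probability $p$ (true-positive rate), which is revealed when the packet's arrival time comes; $\beta$ is the delivery reward and $\lambda$ the cost per transmission. In each max, the first option is not transmitting and the second is transmitting. *)

theory Defs
  imports Complex_Main
begin

definition V1 :: "real \<Rightarrow> real \<Rightarrow> nat \<Rightarrow> nat \<Rightarrow> real" where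
  "V1 p beta tn t = (if t < tn then beta else p * beta)"

fun V0 :: "real \<Rightarrow> real \<Rightarrow> real \<Rightarrow> real \<Rightarrow> nat \<Rightarrow> nat \<Rightarrow> real" where
  "V0 zeta beta lambda p tn 0 = 0"
| "V0 zeta beta lambda p tn (Suc t) =
     (if Suc t = tn + 1
      then max (p * V0 zeta beta lambda p tn t)
               (- lambda + zeta * V1 p beta tn t + (1 - zeta) * p * V0 zeta beta lambda p tn t)
      else max (V0 zeta beta lambda p tn t)
               (- lambda + zeta * V1 p beta tn t + (1 - zeta) * V0 zeta beta lambda p tn t))"

definition opt_wait :: "real \<Rightarrow> real \<Rightarrow> real \<Rightarrow> real \<Rightarrow> nat \<Rightarrow> nat \<Rightarrow> real" where
  "opt_wait zeta beta lambda p tn tau =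
     (if tau = tn + 1 then p * V0 zeta beta lambda p tn (tau - 1)
      else V0 zeta beta lambda p tn (tau - 1))"

definition opt_tx :: "real \<Rightarrow> real \<Rightarrow> real \<Rightarrow> real \<Rightarrow> nat \<Rightarrow> nat \<Rightarrow> real" where
  "opt_tx zeta beta lambda p tn tau =
     (if tau = tn + 1
      then - lambda + zeta * V1 p beta tn (tau - 1) + (1 - zeta) * p * V0 zeta beta lambda p tn (tau - 1)
      else - lambda + zeta * V1 p beta tn (tau - 1) + (1 - zeta) * V0 zeta beta lambda p tn (tau - 1))"

end

theory Submission
  imports Defs
begin

text \<open>Before the arrival time it pays to transmit as long as \<open>\<zeta>\<beta> > \<lambda>\<close>, which gives a geometric
  closed form for \<open>V(0,\<tau>\<^sub>n)\<close>. From the arrival on, the value evolves by the map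
  \<open>x \<mapsto> max x (F + (1 - \<zeta>) x)\<close> with \<open>F = \<zeta>p\<beta> - \<lambda>\<close>, started at \<open>p V(0,\<tau>\<^sub>n)\<close>. This iteration
  either stays at its starting point forever or moves geometrically towards \<open>F/\<zeta>\<close>, depending on
  which side of \<open>F/\<zeta>\<close> the starting point lies; the threshold \<open>c\<close> is exactly this comparison.\<close>

lemma max_affine_iteration_transmits:
  fixes u :: "nat \<Rightarrow> real"
  assumes step: "\<And>n. u (Suc n) = max (u n) (F + (1 - z) * u n)"
    and "z \<le> 1" and start: "z * u 0 \<le> F"
  shows "z * u n = F - (1 - z) ^ n * (F - z * u 0) \<and> u (Suc n) = F + (1 - z) * u n"
proof -
  have transmit: "u (Suc m) = F + (1 - z) * u m" if "z * u m \<le> F" for m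
    using step[of m] that by (simp add: algebra_simps)
  have closed: "z * u m = F - (1 - z) ^ m * (F - z * u 0)" for m
  proof (induction m)
    case 0
    show ?case by simp
  next
    case (Suc m)
    have "0 \<le> (1 - z) ^ m * (F - z * u 0)"
      using \<open>z \<le> 1\<close> start by simp
    then have "z * u (Suc m) = z * (F + (1 - z) * u m)"
      using Suc.IH transmit by simp
    also have "\<dots> = z * F + (1 - z) * (z * u m)"
      by (simp add: algebra_simps)
    also have "\<dots> = F - (1 - z) ^ Suc m * (F - z * u 0)"
      unfolding Suc.IH by (simp add: algebra_simps)
    finally show ?case .
  qed
  have "0 \<le> (1 - z) ^ n * (F - z * u 0)"
    using \<open>z \<le> 1\<close> start by simp
  then show ?thesis
    using closed[of n] transmit[of n] by simp
qed

lemma max_affine_iteration_waits: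
  fixes u :: "nat \<Rightarrow> real"
  assumes step: "\<And>n. u (Suc n) = max (u n) (F + (1 - z) * u n)"
    and start: "F \<le> z * u 0"
  shows "u n = u 0"
proof (induction n)
  case (Suc n)
  then show ?case
    using step[of n] start by (simp add: algebra_simps)
qed simp

lemma V1_le: "0 \<le> b \<Longrightarrow> p \<le> 1 \<Longrightarrow> V1 p b tn t \<le> b"
  using mult_right_mono[of p 1 b] by (simp add: V1_def)

lemma V0_Suc_eq_max_opts:
  "V0 z b l p tn (Suc t) = max (opt_wait z b l p tn (Suc t)) (opt_tx z b l p tn (Suc t))"
  by (simp add: opt_wait_def opt_tx_def)

lemma opt_wait_arrival: "opt_wait z b l p tn (Suc tn) = p * V0 z b l p tn tn"
  by (simp add: opt_wait_def)

lemma opt_wait_after_arrival: "tn < t \<Longrightarrow> opt_wait z b l p tn (Suc t) = V0 z b l p tn t"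
  by (simp add: opt_wait_def)

lemma opt_tx_after_arrival:
  "tn \<le> t \<Longrightarrow> opt_tx z b l p tn (Suc t) = z * (p * b) - l + (1 - z) * opt_wait z b l p tn (Suc t)"
  by (auto simp: opt_tx_def opt_wait_def V1_def)

lemma opt_wait_after_arrival_step:
  "opt_wait z b l p tn (tn + Suc (Suc w)) =
     max (opt_wait z b l p tn (tn + Suc w))
         (z * (p * b) - l + (1 - z) * opt_wait z b l p tn (tn + Suc w))"
  using V0_Suc_eq_max_opts[of z b l p tn "tn + w"] opt_tx_after_arrival[of tn "tn + w"]
    opt_wait_after_arrival[of tn "tn + Suc w"] by simp

lemma V0_before_arrival:
  assumes "z \<le> 1" "l \<le> z * b" "t \<le> tn"
  shows "z * V0 z b l p tn t = (z * b - l) * (1 - (1 - z) ^ t)"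
  using \<open>t \<le> tn\<close>
proof (induction t)
  case (Suc t)
  have IH: "z * V0 z b l p tn t = (z * b - l) * (1 - (1 - z) ^ t)"
    using Suc by simp
  have "0 \<le> (z * b - l) * (1 - z) ^ t"
    using assms by simp
  then have "V0 z b l p tn t \<le> z * b - l + (1 - z) * V0 z b l p tn t"
    using IH by (simp add: algebra_simps)
  then have "V0 z b l p tn (Suc t) = z * b - l + (1 - z) * V0 z b l p tn t"
    using Suc.prems by (simp add: V1_def)
  then have "z * V0 z b l p tn (Suc t) = z * (z * b - l + (1 - z) * V0 z b l p tn t)"
    by (simp only:)
  also have "\<dots> = z * (z * b - l) + (1 - z) * (z * V0 z b l p tn t)"
    by (simp add: algebra_simps)
  also have "\<dots> = (z * b - l) * (1 - (1 - z) ^ Suc t)"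
    unfolding IH by (simp add: algebra_simps)
  finally show ?case .
qed simp

lemma V0_eq_0:
  assumes "0 \<le> z" "0 \<le> b" "p \<le> 1" "z * b \<le> l"
  shows "V0 z b l p tn t = 0"
proof (induction t)
  case (Suc t)
  have "z * V1 p b tn t \<le> z * b"
    using assms V1_le by (simp add: mult_left_mono)
  then show ?case
    using Suc assms by (cases "t = tn") simp_all
qed simp

text \<open>The right-hand side is \<open>p D - \<lambda>\<close> with \<open>c = \<lambda>/D\<close>, so its sign decides the regime.\<close>

lemma transmit_margin_at_arrival:
  assumes "z \<le> 1" "l \<le> z * b"
  shows "z * (p * b) - l - z * opt_wait z b l p tn (Suc tn) = p * ((z * b - l) * (1 - z) ^ tn + l) - l"
proof -
  have "z * opt_wait z b l p tn (Suc tn) = p * (z * V0 z b l p tn tn)"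
    by (simp add: opt_wait_arrival)
  also have "\<dots> = p * ((z * b - l) * (1 - (1 - z) ^ tn))"
    using V0_before_arrival[OF assms] by simp
  finally show ?thesis
    by (simp add: algebra_simps)
qed

lemma post_arrival_transmit:
  assumes "0 < z" "z \<le> 1" "0 \<le> l" "l < z * b"
    and above: "l / ((z * b - l) * (1 - z) ^ tn + l) < p" and "1 \<le> w"
  shows "V0 z b l p tn (tn + w) = - (1 - p) * ((1 - (1 - z) ^ w) / z) * l
                                  + p * ((1 - (1 - z) ^ (tn + w)) / z) * (z * b - l)
         \<and> V0 z b l p tn (tn + w) = opt_tx z b l p tn (tn + w)"
proof -
  define u where "u n = opt_wait z b l p tn (tn + Suc n)" for n
  define F where "F = z * (p * b) - l"
  define D where "D = (z * b - l) * (1 - z) ^ tn + l"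
  have step: "u (Suc n) = max (u n) (F + (1 - z) * u n)" for n
    unfolding u_def F_def using opt_wait_after_arrival_step by simp
  have margin: "F - z * u 0 = p * D - l"
    unfolding u_def F_def D_def using transmit_margin_at_arrival assms by simp
  have "l \<le> D"
    unfolding D_def using assms by simp
  have "l \<le> p * D"
  proof (cases "D = 0")
    case False
    then have "0 < D"
      using \<open>l \<le> D\<close> assms(3) by simp
    moreover have "l / D < p"
      using above unfolding D_def .
    ultimately show ?thesis
      by (simp add: divide_less_eq)
  qed (use \<open>l \<le> D\<close> assms(3) in simp)
  then have start: "z * u 0 \<le> F"
    using margin by simp
  obtain n where w: "w = Suc n"
    using \<open>1 \<le> w\<close> by (cases w) auto
  have V: "V0 z b l p tn (tn + w) = u w"
    unfolding u_def by (simp add: opt_wait_after_arrival w)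
  have "z * u w = F - (1 - z) ^ w * (p * D - l)"
    using max_affine_iteration_transmits[OF step \<open>z \<le> 1\<close> start, of w] margin by simp
  also have "\<dots> = - (1 - p) * (1 - (1 - z) ^ w) * l + p * (1 - (1 - z) ^ (tn + w)) * (z * b - l)"
    unfolding F_def D_def power_add by (simp add: algebra_simps)
  also have "\<dots> = z * (- (1 - p) * ((1 - (1 - z) ^ w) / z) * l
                                  + p * ((1 - (1 - z) ^ (tn + w)) / z) * (z * b - l))"
    using \<open>0 < z\<close> by (simp add: field_simps)
  finally have "z * V0 z b l p tn (tn + w) = \<dots>"
    unfolding V .
  moreover have "u w = opt_tx z b l p tn (tn + w)"
    using max_affine_iteration_transmits[OF step \<open>z \<le> 1\<close> start, of n]
      opt_tx_after_arrival[of tn "tn + n"] by (simp add: w u_def F_def)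
  ultimately show ?thesis
    using \<open>0 < z\<close> V by simp
qed

lemma post_arrival_wait:
  assumes "z \<le> 1" "0 \<le> l" "l < z * b" "0 < p"
    and below: "p \<le> l / ((z * b - l) * (1 - z) ^ tn + l)" and "1 \<le> w"
  shows "V0 z b l p tn (tn + w) = p * V0 z b l p tn tn"
    and "p < l / ((z * b - l) * (1 - z) ^ tn + l) \<Longrightarrow>
           opt_tx z b l p tn (tn + w) < opt_wait z b l p tn (tn + w)"
proof -
  define u where "u n = opt_wait z b l p tn (tn + Suc n)" for n
  define F where "F = z * (p * b) - l"
  define D where "D = (z * b - l) * (1 - z) ^ tn + l"
  have step: "u (Suc n) = max (u n) (F + (1 - z) * u n)" for n
    unfolding u_def F_def using opt_wait_after_arrival_step by simp
  have margin: "F - z * u 0 = p * D - l"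
    unfolding u_def F_def D_def using transmit_margin_at_arrival assms by simp
  have below_D: "p \<le> l / D"
    using below unfolding D_def .
  have "0 \<le> D"
    unfolding D_def using assms by simp
  moreover have "D \<noteq> 0"
    using below_D \<open>0 < p\<close> by auto
  ultimately have "0 < D"
    by simp
  then have "p * D \<le> l"
    using below_D by (simp add: le_divide_eq)
  then have stationary: "u n = u 0" for n
    using max_affine_iteration_waits[of u F z, OF step] margin by simp
  obtain n where w: "w = Suc n"
    using \<open>1 \<le> w\<close> by (cases w) auto
  show "V0 z b l p tn (tn + w) = p * V0 z b l p tn tn"
    using stationary[of w] by (simp add: u_def w opt_wait_after_arrival opt_wait_arrival)
  assume "p < l / ((z * b - l) * (1 - z) ^ tn + l)"
  then have "p * D < l"
    using \<open>0 < D\<close> unfolding D_def[symmetric] by (simp add: less_divide_eq)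
  then have "F + (1 - z) * u 0 < u 0"
    using margin by (simp add: algebra_simps)
  then show "opt_tx z b l p tn (tn + w) < opt_wait z b l p tn (tn + w)"
    using stationary[of n] opt_tx_after_arrival[of tn "tn + n"] by (simp add: w u_def F_def)
qed

lemma unprofitable_opt_tx_less_opt_wait:
  assumes "0 \<le> z" "0 \<le> b" "p \<le> 1" "z * b < l" "0 < tau"
  shows "opt_tx z b l p tn tau < opt_wait z b l p tn tau"
proof -
  obtain t where tau: "tau = Suc t"
    using \<open>0 < tau\<close> gr0_implies_Suc by blast
  have "z * V1 p b tn t \<le> z * b"
    using assms V1_le by (simp add: mult_left_mono)
  then show ?thesis
    using V0_eq_0[of z b p l] assms
    by (cases "t = tn") (simp_all add: tau opt_tx_def opt_wait_def)
qed

theorem theorem3: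
  fixes zeta beta lambda p :: real and tn Dn :: nat
  assumes "0 < zeta" "zeta \<le> 1" "0 \<le> beta" "0 \<le> lambda" "0 < p" "p \<le> 1"
    and "1 \<le> tn" "1 \<le> Dn"
  defines "V \<equiv> V0 zeta beta lambda p tn"
    and "W \<equiv> opt_wait zeta beta lambda p tn"
    and "T \<equiv> opt_tx zeta beta lambda p tn"
    and "c \<equiv> lambda / ((zeta * beta - lambda) * (1 - zeta) ^ tn + lambda)"
  shows
    "(zeta * beta > lambda \<longrightarrow>
       (p > c \<longrightarrow>
          (\<forall>w. 1 \<le> w \<and> w \<le> Dn \<longrightarrow>
             V (tn + w) = - (1 - p) * ((1 - (1 - zeta) ^ w) / zeta) * lambda
                          + p * ((1 - (1 - zeta) ^ (tn + w)) / zeta) * (zeta * beta - lambda)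
             \<and> V (tn + w) = T (tn + w))) \<and>
       (p \<le> c \<longrightarrow>
          (\<forall>w. 1 \<le> w \<and> w \<le> Dn \<longrightarrow>
             V (tn + w) = p * ((1 - (1 - zeta) ^ tn) / zeta) * (zeta * beta - lambda)) \<and>
          (p < c \<longrightarrow> (\<forall>w. 1 \<le> w \<and> w \<le> Dn \<longrightarrow> T (tn + w) < W (tn + w))))) \<and>
     (zeta * beta \<le> lambda \<longrightarrow>
       (\<forall>w. 1 \<le> w \<and> w \<le> Dn \<longrightarrow> V (tn + w) = 0) \<and>
       (zeta * beta < lambda \<longrightarrow>
          (\<forall>tau. 1 \<le> tau \<and> tau \<le> tn + Dn \<longrightarrow> T tau < W tau)))"
proof -
  have V_arrival: "V tn = (zeta * beta - lambda) * (1 - (1 - zeta) ^ tn) / zeta"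
    if "lambda < zeta * beta"
    using V0_before_arrival[of zeta lambda beta tn tn p] that assms(1,2)
    unfolding V_def by (simp add: field_simps)
  show ?thesis
    using post_arrival_transmit[of zeta lambda beta tn p] V_arrival
      post_arrival_wait[of zeta lambda beta p tn] V0_eq_0[of zeta beta p lambda tn]
      unprofitable_opt_tx_less_opt_wait[of zeta beta p lambda _ tn] assms(1-6)
    unfolding V_def W_def T_def c_def by (intro conjI impI allI) (blast | auto)+
qed

end
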